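(* Let $P$ be a poset such that $\Sigma P$ is an $\omega$ type space. Then $\Sigma\sigma(P)$ is sober.
   Context: For a poset $P$, $\sigma(P)$ is the set of Scott open subsets of $P$ (a set $U$ is Scott open iff it is an upper set and for every directed $D$ whose supremum exists, $\bigvee D\in U$ implies $D\cap U\neq\emptyset$), $\Sigma P=(P,\sigma(P))$, and $\Sigma\sigma(P)$ is the poset $(\sigma(P),\subseteq)$ with its Scott topology. A topological space is an $\omega$ type space if it has a subbase consisting of countable subsets. A $T_0$ space is sober if every irreducible closed set equals $\overline{\{x\}}$ for some point $x$. *)

theory Defs
  imports "HOL-Analysis.Analysis"
begin

definition directed_in :: "'a::order set \<Rightarrow> 'a set \<Rightarrow> bool" where
  "directed_in S D \<longleftrightarrow> D \<noteq> {} \<and> D \<subseteq> S \<and>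
     (\<forall>x\<in>D. \<forall>y\<in>D. \<exists>z\<in>D. x \<le> z \<and> y \<le> z)"

definition is_lub_in :: "'a::order set \<Rightarrow> 'a set \<Rightarrow> 'a \<Rightarrow> bool" where
  "is_lub_in S D s \<longleftrightarrow> s \<in> S \<and> (\<forall>x\<in>D. x \<le> s) \<and>
     (\<forall>u\<in>S. (\<forall>x\<in>D. x \<le> u) \<longrightarrow> s \<le> u)"

definition scott_open_in :: "'a::order set \<Rightarrow> 'a set \<Rightarrow> bool" where
  "scott_open_in S U \<longleftrightarrow> U \<subseteq> S \<and> (\<forall>x\<in>U. \<forall>y\<in>S. x \<le> y \<longrightarrow> y \<in> U) \<and>
     (\<forall>D s. directed_in S D \<and> is_lub_in S D s \<and> s \<in> U \<longrightarrow> D \<inter> U \<noteq> {})"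

definition scott_opens :: "'a::order set \<Rightarrow> 'a set set" where
  "scott_opens S = {U. scott_open_in S U}"

definition scott_topology :: "'a::order set \<Rightarrow> 'a topology" where
  "scott_topology S = topology (scott_open_in S)"

lemma istopology_scott_open_in: "istopology (scott_open_in S)"
  unfolding istopology_def
proof (intro conjI allI impI)
  fix U V assume U: "scott_open_in S U" and V: "scott_open_in S V"
  have 1: "U \<inter> V \<subseteq> S" using U unfolding scott_open_in_def by blast
  have 2: "\<forall>x\<in>U \<inter> V. \<forall>y\<in>S. x \<le> y \<longrightarrow> y \<in> U \<inter> V"
    using U V unfolding scott_open_in_def by blast
  have 3: "D \<inter> (U \<inter> V) \<noteq> {}"
    if h: "directed_in S D" "is_lub_in S D s" "s \<in> U \<inter> V" for D s
  proof -
    obtain x where x: "x \<in> D \<inter> U" using h U unfolding scott_open_in_def by blast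
    obtain y where y: "y \<in> D \<inter> V" using h V unfolding scott_open_in_def by blast
    obtain z where z: "z \<in> D" "x \<le> z" "y \<le> z"
      using h x y unfolding directed_in_def by blast
    have zS: "z \<in> S" using h z unfolding directed_in_def by blast
    have "z \<in> U" using U x z zS unfolding scott_open_in_def by blast
    moreover have "z \<in> V" using V y z zS unfolding scott_open_in_def by blast
    ultimately show ?thesis using z by blast
  qed
  show "scott_open_in S (U \<inter> V)"
    unfolding scott_open_in_def
    apply (rule conjI[OF 1 conjI[OF 2]])
    apply (intro allI impI)
    apply (elim conjE)
    by (rule 3)
next
  fix K assume K: "\<forall>U\<in>K. scott_open_in S U"
  have 1: "\<Union>K \<subseteq> S" using K unfolding scott_open_in_def by blast
  have 2: "\<forall>x\<in>\<Union>K. \<forall>y\<in>S. x \<le> y \<longrightarrow> y \<in> \<Union>K"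
  proof (intro ballI impI)
    fix x y assume "x \<in> \<Union>K" "y \<in> S" "x \<le> y"
    then obtain U where U: "U \<in> K" "x \<in> U" by blast
    then have "scott_open_in S U" using K by blast
    then have "y \<in> U" using U \<open>y \<in> S\<close> \<open>x \<le> y\<close> unfolding scott_open_in_def by blast
    then show "y \<in> \<Union>K" using U by blast
  qed
  have 3: "D \<inter> \<Union>K \<noteq> {}"
    if h: "directed_in S D" "is_lub_in S D s" "s \<in> \<Union>K" for D s
  proof -
    obtain U where U: "U \<in> K" "s \<in> U" using h by blast
    then have "scott_open_in S U" using K by blast
    then have "D \<inter> U \<noteq> {}" using U h unfolding scott_open_in_def by blast
    then show ?thesis using U by blast
  qed
  show "scott_open_in S (\<Union>K)"
    unfolding scott_open_in_def
    apply (rule conjI[OF 1 conjI[OF 2]])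
    apply (intro allI impI)
    apply (elim conjE)
    by (rule 3)
qed

lemma openin_scott_topology: "openin (scott_topology S) U \<longleftrightarrow> scott_open_in S U"
  unfolding scott_topology_def using istopology_scott_open_in topology_inverse' by metis

text \<open>omega type space: has a subbase of countable sets (finite intersections of
  subbase elements, the empty intersection being the whole space, form a base).\<close>
definition omega_type_space :: "'a topology \<Rightarrow> bool" where
  "omega_type_space X \<longleftrightarrow> (\<exists>B. (\<forall>b\<in>B. countable b) \<and>
     (\<forall>U. openin X U \<longleftrightarrow>
        (\<exists>\<U>. U = \<Union>\<U> \<and> (\<forall>V\<in>\<U>. \<exists>F. finite F \<and> F \<subseteq> B \<and> V = topspace X \<inter> \<Inter>F))))"

definition irreducible_in :: "'a topology \<Rightarrow> 'a set \<Rightarrow> bool" where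
  "irreducible_in X C \<longleftrightarrow> C \<noteq> {} \<and> C \<subseteq> topspace X \<and>
     (\<forall>A B. closedin X A \<and> closedin X B \<and> C \<subseteq> A \<union> B \<longrightarrow> C \<subseteq> A \<or> C \<subseteq> B)"

definition sober_space :: "'a topology \<Rightarrow> bool" where
  "sober_space X \<longleftrightarrow> t0_space X \<and>
     (\<forall>C. closedin X C \<and> irreducible_in X C \<longrightarrow> (\<exists>x\<in>topspace X. C = X closure_of {x}))"

end

theory Submission
  imports Defs
begin

text \<open>
  An irreducible closed set C of \<open>\<Sigma>\<sigma>(P)\<close> is a down-set of \<open>\<sigma>(P)\<close> closed under directed
  unions, and irreducibility (tested on the Scott open sets \<open>{U. x \<in> U}\<close>) puts every finite
  subset of \<open>W = \<Union>C\<close> inside a single member of C. For a countable Scott open \<open>G \<subseteq> W\<close>,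
  enumerate G and choose \<open>Y\<^sub>m \<in> C\<close> containing its first m + 1 elements; the sets
  \<open>G \<inter> \<Inter>{Y\<^sub>m | m \<ge> n}\<close> are still Scott open, lie in C, and increase to G, so \<open>G \<in> C\<close>.
  Since \<open>\<Sigma>P\<close> is of \<open>\<omega>\<close> type, W is the directed union of the countable Scott open sets
  it contains, so \<open>W \<in> C\<close> and C is the closure of \<open>{W}\<close>.
\<close>

lemma topspace_scott_topology: "topspace (scott_topology S) = S"
proof -
  have "scott_open_in S S" unfolding scott_open_in_def directed_in_def by auto
  moreover have "U \<subseteq> S" if "scott_open_in S U" for U
    using that unfolding scott_open_in_def by auto
  ultimately show ?thesis unfolding topspace_def openin_scott_topology by blast
qed

lemma closedin_scott_topology:
  "closedin (scott_topology S) C \<longleftrightarrow> C \<subseteq> S \<and> scott_open_in S (S - C)"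
  by (simp add: closedin_def topspace_scott_topology openin_scott_topology)

lemma scott_open_inI:
  assumes "U \<subseteq> S"
    and "\<And>x y. x \<in> U \<Longrightarrow> y \<in> S \<Longrightarrow> x \<le> y \<Longrightarrow> y \<in> U"
    and "\<And>D s. directed_in S D \<Longrightarrow> is_lub_in S D s \<Longrightarrow> s \<in> U \<Longrightarrow> D \<inter> U \<noteq> {}"
  shows "scott_open_in S U"
  using assms unfolding scott_open_in_def by blast

lemma scott_open_in_subset: "scott_open_in S U \<Longrightarrow> U \<subseteq> S"
  by (simp add: scott_open_in_def)

lemma scott_open_in_upward:
  "scott_open_in S U \<Longrightarrow> x \<in> U \<Longrightarrow> y \<in> S \<Longrightarrow> x \<le> y \<Longrightarrow> y \<in> U"
  by (auto simp: scott_open_in_def)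

lemma scott_open_in_lub:
  "scott_open_in S U \<Longrightarrow> directed_in S D \<Longrightarrow> is_lub_in S D s \<Longrightarrow> s \<in> U \<Longrightarrow> \<exists>d\<in>D. d \<in> U"
  unfolding scott_open_in_def by blast

lemma closedin_scott_downward:
  assumes "closedin (scott_topology S) C" "c \<in> C" "y \<in> S" "y \<le> c"
  shows "y \<in> C"
  using assms scott_open_in_upward[of S "S - C" y c] by (auto simp: closedin_scott_topology)

lemma closedin_scott_lub:
  assumes "closedin (scott_topology S) C" "directed_in S D" "D \<subseteq> C" "is_lub_in S D s"
  shows "s \<in> C"
  using assms scott_open_in_lub[of S "S - C" D s]
  by (auto simp: closedin_scott_topology is_lub_in_def)

lemma scott_open_in_not_below:
  assumes "y \<in> S"
  shows "scott_open_in S {z \<in> S. \<not> z \<le> y}"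
proof (rule scott_open_inI)
  fix D s assume D: "directed_in S D" and s: "is_lub_in S D s" "s \<in> {z \<in> S. \<not> z \<le> y}"
  show "D \<inter> {z \<in> S. \<not> z \<le> y} \<noteq> {}"
  proof
    assume "D \<inter> {z \<in> S. \<not> z \<le> y} = {}"
    with D have "\<forall>x\<in>D. x \<le> y" unfolding directed_in_def by blast
    with s assms show False unfolding is_lub_in_def by auto
  qed
qed (auto dest: order_trans)

lemma t0_space_scott_topology: "t0_space (scott_topology S)"
  unfolding t0_space_def topspace_scott_topology openin_scott_topology
proof (intro ballI impI)
  fix x y assume xy: "x \<in> S" "y \<in> S" "x \<noteq> y"
  show "\<exists>U. scott_open_in S U \<and> (x \<notin> U) = (y \<in> U)"
  proof (cases "x \<le> y")
    case True
    then show ?thesis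
      using scott_open_in_not_below[OF xy(1)] xy antisym
      by (intro exI[of _ "{z\<in>S. \<not> z \<le> x}"]) auto
  next
    case False
    then show ?thesis
      using scott_open_in_not_below[OF xy(2)] xy
      by (intro exI[of _ "{z\<in>S. \<not> z \<le> y}"]) auto
  qed
qed

lemma scott_closure_of_singleton:
  assumes "x \<in> S"
  shows "scott_topology S closure_of {x} = {z \<in> S. z \<le> x}"
proof
  show "scott_topology S closure_of {x} \<subseteq> {z \<in> S. z \<le> x}"
  proof
    fix z assume "z \<in> scott_topology S closure_of {x}"
    then have "z \<in> S" and "\<forall>T. z \<in> T \<and> scott_open_in S T \<longrightarrow> x \<in> T"
      unfolding closure_of_def topspace_scott_topology openin_scott_topology by auto
    then have "z \<in> {w \<in> S. \<not> w \<le> x} \<and> scott_open_in S {w \<in> S. \<not> w \<le> x}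
        \<longrightarrow> x \<in> {w \<in> S. \<not> w \<le> x}"
      by (elim conjE spec)
    with \<open>z \<in> S\<close> show "z \<in> {z \<in> S. z \<le> x}"
      using scott_open_in_not_below[OF assms] by auto
  qed
  show "{z \<in> S. z \<le> x} \<subseteq> scott_topology S closure_of {x}"
    using scott_open_in_upward assms
    unfolding closure_of_def topspace_scott_topology openin_scott_topology by blast
qed

lemma directed_in_finite_upper_bound:
  assumes "directed_in S D" "finite F" "F \<subseteq> D"
  shows "\<exists>z\<in>D. \<forall>x\<in>F. x \<le> z"
  using assms(2,3)
proof (induction F)
  case empty
  then show ?case using assms(1) unfolding directed_in_def by auto
next
  case (insert x F)
  then obtain z where "z \<in> D" "\<forall>y\<in>F. y \<le> z" by auto
  moreover obtain z' where "z' \<in> D" "x \<le> z'" "z \<le> z'"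
    using assms(1) insert.prems \<open>z \<in> D\<close> unfolding directed_in_def by blast
  ultimately show ?case by (auto dest: order_trans)
qed

lemma is_lub_in_unique: "is_lub_in S D s \<Longrightarrow> is_lub_in S D t \<Longrightarrow> s = t"
  unfolding is_lub_in_def by (blast intro: antisym)

lemma Union_in_scott_opens: "\<U> \<subseteq> scott_opens P \<Longrightarrow> \<Union>\<U> \<in> scott_opens P"
  using openin_Union[of \<U> "scott_topology P"]
  by (auto simp: openin_scott_topology scott_opens_def)

lemma is_lub_in_scott_opens_Union: "\<U> \<subseteq> scott_opens P \<Longrightarrow> is_lub_in (scott_opens P) \<U> (\<Union>\<U>)"
  using Union_in_scott_opens unfolding is_lub_in_def by auto

lemma scott_open_in_scott_opens_mem: "scott_open_in (scott_opens P) {U \<in> scott_opens P. x \<in> U}"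
proof (rule scott_open_inI)
  fix \<D> s assume \<D>: "directed_in (scott_opens P) \<D>" and s: "is_lub_in (scott_opens P) \<D> s"
    and "s \<in> {U \<in> scott_opens P. x \<in> U}"
  moreover have "\<D> \<subseteq> scott_opens P"
    using \<D> by (simp add: directed_in_def)
  then have "s = \<Union>\<D>"
    using is_lub_in_unique[OF s is_lub_in_scott_opens_Union] by simp
  ultimately show "\<D> \<inter> {U \<in> scott_opens P. x \<in> U} \<noteq> {}"
    unfolding directed_in_def by auto
qed auto

lemma closedin_scott_opens_directed_Union:
  assumes "closedin (scott_topology (scott_opens P)) C" "directed_in (scott_opens P) \<D>" "\<D> \<subseteq> C"
  shows "\<Union>\<D> \<in> C"
proof -
  have "\<D> \<subseteq> scott_opens P"
    using assms(2) by (simp add: directed_in_def)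
  then show ?thesis
    using closedin_scott_lub[OF assms is_lub_in_scott_opens_Union] by simp
qed

lemma irreducible_inD:
  "irreducible_in X C \<Longrightarrow> closedin X A \<Longrightarrow> closedin X B \<Longrightarrow> C \<subseteq> A \<union> B \<Longrightarrow> C \<subseteq> A \<or> C \<subseteq> B"
  by (simp add: irreducible_in_def)

lemma irreducible_in_Inter_openin:
  assumes "irreducible_in X C" "finite \<U>" "\<And>U. U \<in> \<U> \<Longrightarrow> openin X U \<and> C \<inter> U \<noteq> {}"
  shows "C \<inter> \<Inter>\<U> \<noteq> {}"
  using assms(2,3)
proof (induction \<U>)
  case empty
  then show ?case using assms(1) unfolding irreducible_in_def by simp
next
  case (insert U \<U>)
  let ?V = "topspace X \<inter> \<Inter>\<U>"
  have "C \<subseteq> topspace X"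
    using assms(1) by (simp add: irreducible_in_def)
  have "closedin X (topspace X - U)"
    using insert by auto
  moreover have "closedin X (topspace X - ?V)"
    using insert by (intro closedin_diff closedin_topspace openin_Int_Inter) auto
  ultimately have "\<not> C \<subseteq> (topspace X - U) \<union> (topspace X - ?V)"
  proof (intro notI)
    assume "closedin X (topspace X - U)" "closedin X (topspace X - ?V)"
      and "C \<subseteq> (topspace X - U) \<union> (topspace X - ?V)"
    then have "C \<subseteq> topspace X - U \<or> C \<subseteq> topspace X - ?V"
      by (rule irreducible_inD[OF assms(1)])
    moreover have "C \<inter> U \<noteq> {}" "C \<inter> ?V \<noteq> {}"
      using insert \<open>C \<subseteq> topspace X\<close> by auto
    ultimately show False by blast
  qed
  then show ?case using \<open>C \<subseteq> topspace X\<close> by blast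
qed

text \<open>Properness of U is needed: the empty intersection of subbasic sets is the whole space,
  which need not be countable.\<close>

lemma omega_type_space_countable_open_nbhd:
  assumes "omega_type_space X" "openin X U" "U \<noteq> topspace X" "x \<in> U"
  obtains V where "openin X V" "countable V" "x \<in> V" "V \<subseteq> U"
proof -
  obtain B where countable_B: "\<forall>b\<in>B. countable b"
    and base_B: "\<forall>U. openin X U \<longleftrightarrow> (\<exists>\<U>. U = \<Union>\<U> \<and>
        (\<forall>V\<in>\<U>. \<exists>F. finite F \<and> F \<subseteq> B \<and> V = topspace X \<inter> \<Inter>F))"
    using assms(1) unfolding omega_type_space_def by (elim exE conjE)
  obtain \<U> where "U = \<Union>\<U>" and \<U>: "\<forall>V\<in>\<U>. \<exists>F. finite F \<and> F \<subseteq> B \<and> V = topspace X \<inter> \<Inter>F"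
    using base_B[rule_format, THEN iffD1, OF assms(2)] by (elim exE conjE)
  obtain V where V: "V \<in> \<U>" "x \<in> V"
    using \<open>U = \<Union>\<U>\<close> assms(4) by blast
  have "V \<subseteq> U"
    unfolding \<open>U = \<Union>\<U>\<close> using V(1) by (rule Union_upper)
  obtain F where F: "finite F" "F \<subseteq> B" "V = topspace X \<inter> \<Inter>F"
    using bspec[OF \<U> V(1)] by (elim exE conjE)
  have "openin X V"
    using F by (intro base_B[rule_format, THEN iffD2] exI[of _ "{V}"]) auto
  moreover have "F \<noteq> {}"
  proof
    assume "F = {}"
    then have "topspace X \<subseteq> U" using F(3) \<open>V \<subseteq> U\<close> by simp
    then show False using assms(3) openin_subset[OF assms(2)] by blast
  qed
  then obtain b where "b \<in> F" by blast
  then have "countable V"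
    using F(2,3) countable_B countable_subset[of V b] by blast
  ultimately show ?thesis using that V(2) \<open>V \<subseteq> U\<close> by blast
qed

lemma scott_open_in_Int_eventually:
  fixes Y :: "nat \<Rightarrow> 'a::order set"
  assumes G: "scott_open_in S G" and Y: "\<And>m. scott_open_in S (Y m)"
    and eventually_in_Y: "\<And>x. x \<in> G \<Longrightarrow> \<exists>k. \<forall>m\<ge>k. x \<in> Y m"
  shows "scott_open_in S (G \<inter> \<Inter>(Y ` M))"
proof (rule scott_open_inI)
  show "G \<inter> \<Inter>(Y ` M) \<subseteq> S" using G scott_open_in_subset by blast
next
  fix x y assume "x \<in> G \<inter> \<Inter>(Y ` M)" "y \<in> S" "x \<le> y"
  then show "y \<in> G \<inter> \<Inter>(Y ` M)" using G Y scott_open_in_upward by blast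
next
  fix D s assume D: "directed_in S D" and s: "is_lub_in S D s" "s \<in> G \<inter> \<Inter>(Y ` M)"
  obtain d where d: "d \<in> D" "d \<in> G" using scott_open_in_lub[OF G D s(1)] s(2) by blast
  obtain k where k: "\<forall>m\<ge>k. d \<in> Y m" using eventually_in_Y[OF d(2)] by blast
  have "\<forall>m \<in> M \<inter> {..<k}. \<exists>d'. d' \<in> D \<and> d' \<in> Y m"
    using scott_open_in_lub[OF Y D s(1)] s(2) by blast
  from bchoice[OF this] obtain f where f: "\<forall>m \<in> M \<inter> {..<k}. f m \<in> D \<and> f m \<in> Y m"
    by blast
  have "finite (insert d (f ` (M \<inter> {..<k})))"
    by (intro finite.insertI finite_imageI finite_Int disjI2 finite_lessThan)
  moreover have "insert d (f ` (M \<inter> {..<k})) \<subseteq> D"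
    using d(1) f by auto
  ultimately obtain e where e: "e \<in> D" "\<forall>x \<in> insert d (f ` (M \<inter> {..<k})). x \<le> e"
    using directed_in_finite_upper_bound[OF D] by meson
  have "e \<in> S" using D e(1) unfolding directed_in_def by blast
  have "e \<in> Y m" if "m \<in> M" for m
  proof (cases "m < k")
    case True
    then show ?thesis using f e(2) that scott_open_in_upward[OF Y _ \<open>e \<in> S\<close>] by blast
  next
    case False
    then have "d \<in> Y m" using k by (simp add: not_less)
    then show ?thesis using e(2) scott_open_in_upward[OF Y _ \<open>e \<in> S\<close>] by blast
  qed
  moreover have "e \<in> G" using d(2) e(2) scott_open_in_upward[OF G _ \<open>e \<in> S\<close>] by blast
  ultimately show "D \<inter> (G \<inter> \<Inter>(Y ` M)) \<noteq> {}" using e(1) by blast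
qed

lemma countable_mem_closedin_scott_opens:
  assumes C: "closedin (scott_topology (scott_opens P)) C"
    and G: "G \<in> scott_opens P" "countable G"
    and finite_cover: "\<And>F. finite F \<Longrightarrow> F \<subseteq> G \<Longrightarrow> \<exists>Y\<in>C. F \<subseteq> Y"
  shows "G \<in> C"
proof -
  \<comment> \<open>Intersecting with G discards the junk values of \<open>from_nat_into\<close> when G is empty.\<close>
  define F where "F m = G \<inter> from_nat_into G ` {..m}" for m
  have "\<forall>m. \<exists>Y\<in>C. F m \<subseteq> Y" using finite_cover unfolding F_def by simp
  then obtain Y where Y: "\<And>m. Y m \<in> C" "\<And>m. F m \<subseteq> Y m" by metis
  have CL: "C \<subseteq> scott_opens P" using C by (simp add: closedin_scott_topology)
  have eventually_in_Y: "\<forall>m\<ge>to_nat_on G x. x \<in> Y m" if "x \<in> G" for x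
  proof (intro allI impI)
    fix m assume "to_nat_on G x \<le> m"
    then have "x \<in> F m"
      using that G(2) unfolding F_def by (metis IntI atMost_iff from_nat_into_to_nat_on imageI)
    then show "x \<in> Y m" using Y(2) by blast
  qed
  define A where "A n = G \<inter> \<Inter>(Y ` {n..})" for n
  have Y_open: "scott_open_in P (Y m)" for m
    using Y(1) CL by (auto simp: scott_opens_def)
  have A_open: "A n \<in> scott_opens P" for n
    unfolding A_def scott_opens_def mem_Collect_eq
  proof (rule scott_open_in_Int_eventually[OF _ Y_open])
    show "scott_open_in P G" using G(1) by (simp add: scott_opens_def)
    show "\<exists>k. \<forall>m\<ge>k. x \<in> Y m" if "x \<in> G" for x
      using eventually_in_Y[OF that] by blast
  qed
  have A_in_C: "A n \<in> C" for n
    using closedin_scott_downward[OF C Y(1) A_open, of n] by (auto simp: A_def)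
  have "directed_in (scott_opens P) (range A)"
    unfolding directed_in_def
  proof (intro conjI ballI)
    fix U V assume "U \<in> range A" "V \<in> range A"
    then obtain i j where "U = A i" "V = A j" by blast
    then show "\<exists>W\<in>range A. U \<le> W \<and> V \<le> W"
      by (intro bexI[of _ "A (max i j)"]) (auto simp: A_def)
  qed (use A_open in auto)
  moreover have "\<Union>(range A) = G"
    using eventually_in_Y unfolding A_def by blast
  ultimately show "G \<in> C"
    using closedin_scott_opens_directed_Union[OF C] A_in_C by (metis image_subset_iff)
qed

lemma irreducible_in_scott_opens_finite_subset:
  assumes "irreducible_in (scott_topology (scott_opens P)) C" "finite F" "F \<subseteq> \<Union>C"
  shows "\<exists>Y\<in>C. F \<subseteq> Y"
proof -
  have "C \<subseteq> scott_opens P"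
    using assms(1) by (simp add: irreducible_in_def topspace_scott_topology)
  then have "C \<inter> \<Inter>((\<lambda>x. {U \<in> scott_opens P. x \<in> U}) ` F) \<noteq> {}"
    using assms(2,3) by (intro irreducible_in_Inter_openin[OF assms(1)])
      (auto simp: openin_scott_topology scott_open_in_scott_opens_mem)
  then show ?thesis by blast
qed

lemma directed_in_countable_scott_opens_below:
  "directed_in (scott_opens P) {G \<in> scott_opens P. G \<subseteq> W \<and> countable G}"
  unfolding directed_in_def
proof (intro conjI ballI)
  fix U V assume "U \<in> {G \<in> scott_opens P. G \<subseteq> W \<and> countable G}"
    "V \<in> {G \<in> scott_opens P. G \<subseteq> W \<and> countable G}"
  then have "U \<union> V \<in> {G \<in> scott_opens P. G \<subseteq> W \<and> countable G}"
    using Union_in_scott_opens[of "{U, V}" P] by auto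
  then show "\<exists>Z\<in>{G \<in> scott_opens P. G \<subseteq> W \<and> countable G}. U \<le> Z \<and> V \<le> Z" by blast
next
  have "{} \<in> {G \<in> scott_opens P. G \<subseteq> W \<and> countable G}"
    by (simp add: scott_opens_def scott_open_in_def)
  then show "{G \<in> scott_opens P. G \<subseteq> W \<and> countable G} \<noteq> {}" by blast
qed auto

lemma Union_mem_irreducible_closedin_scott_opens:
  assumes omega: "omega_type_space (scott_topology P)"
    and C: "closedin (scott_topology (scott_opens P)) C"
      "irreducible_in (scott_topology (scott_opens P)) C"
  shows "\<Union>C \<in> C"
proof (cases "P \<in> C")
  case True
  moreover have "C \<subseteq> scott_opens P" using C(1) by (simp add: closedin_scott_topology)
  ultimately have "\<Union>C = P" by (auto simp: scott_opens_def scott_open_in_def)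
  with True show ?thesis by simp
next
  case False
  define \<D> where "\<D> = {G \<in> scott_opens P. G \<subseteq> \<Union>C \<and> countable G}"
  have "\<D> \<subseteq> C"
  proof
    fix G assume "G \<in> \<D>"
    then have "G \<in> scott_opens P" "G \<subseteq> \<Union>C" "countable G" by (auto simp: \<D>_def)
    then show "G \<in> C"
      using irreducible_in_scott_opens_finite_subset[OF C(2)]
      by (intro countable_mem_closedin_scott_opens[OF C(1)]) auto
  qed
  moreover have "\<Union>C \<subseteq> \<Union>\<D>"
  proof
    fix x assume "x \<in> \<Union>C"
    then obtain U where U: "U \<in> C" "x \<in> U" by blast
    moreover have "openin (scott_topology P) U" "U \<noteq> topspace (scott_topology P)"
      using U False C(1)
      by (auto simp: closedin_scott_topology openin_scott_topology scott_opens_def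
          topspace_scott_topology)
    ultimately obtain V where "openin (scott_topology P) V" "countable V" "x \<in> V" "V \<subseteq> U"
      using omega_type_space_countable_open_nbhd[OF omega] by metis
    then show "x \<in> \<Union>\<D>"
      using U unfolding \<D>_def by (auto simp: openin_scott_topology scott_opens_def)
  qed
  moreover have "\<Union>\<D> \<subseteq> \<Union>C" by (auto simp: \<D>_def)
  moreover have "\<Union>\<D> \<in> C"
    unfolding \<D>_def
    by (rule closedin_scott_opens_directed_Union[OF C(1) directed_in_countable_scott_opens_below])
      (fact \<open>\<D> \<subseteq> C\<close>[unfolded \<D>_def])
  ultimately show ?thesis by (metis subset_antisym)
qed

theorem corollary4p9:
  fixes P :: "'a::order set"
  assumes "omega_type_space (scott_topology P)"
  shows "sober_space (scott_topology (scott_opens P))"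
  unfolding sober_space_def
proof (intro conjI allI impI)
  show "t0_space (scott_topology (scott_opens P))" by (rule t0_space_scott_topology)
next
  fix C assume "closedin (scott_topology (scott_opens P)) C \<and>
      irreducible_in (scott_topology (scott_opens P)) C"
  then have C: "closedin (scott_topology (scott_opens P)) C" and "\<Union>C \<in> C"
    using Union_mem_irreducible_closedin_scott_opens[OF assms] by auto
  then have "C = {U \<in> scott_opens P. U \<le> \<Union>C}"
    using closedin_scott_downward[OF C] by (auto simp: closedin_scott_topology)
  moreover have "\<Union>C \<in> scott_opens P"
    using C \<open>\<Union>C \<in> C\<close> unfolding closedin_scott_topology by blast
  ultimately show "\<exists>W\<in>topspace (scott_topology (scott_opens P)).
      C = scott_topology (scott_opens P) closure_of {W}"
    by (auto simp: scott_closure_of_singleton topspace_scott_topology)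
qed

end
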